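(* Let $X$ be a discretely geodesic metric space with $\beta$-stable intervals in which all bounded subsets are finite. Fix $z\in X$ and $\alpha>0$, and let $B$ be the closed ball $B(z,2\alpha\beta)$. Then $|\mathscr C(B)|<\infty$, and (1) every $f\in\mathrm E'(X)$ with $f(z)\le\alpha$ satisfies $\mathrm{rk}(A(f))\le\frac12|\mathscr C(B)|$; (2) for every $f\in\mathrm E'(X)$ with $f(z)\le\alpha$ and $\mathrm{rk}(A(f))=0$ there are at most $2^{|\mathscr C(B)|}$ sets $A\in\mathscr A(X)$ with $A\subset A(f)$ and $\mathrm{rk}(A)=1$.
   Context: $X$ is discretely geodesic if $d$ is integer valued and any $x,y$ are joined by an isometric embedding $\gamma\colon\{0,\dots,d(x,y)\}\to X$ with endpoints $x,y$. $I(x,y)=\{u: d(x,u)+d(u,y)=d(x,y)\}$; $C(x,v)=\{y: v\in I(x,y)\}$; $\beta$-stable intervals: Hausdorff distance of $I(x,y)$ and $I(x,y')$ at most $\beta$ whenever $d(y,y')=1$. $\mathscr C(B)$ is the set of all pointed cones $(v,C(x,v))$ with $v\in B$, $x\in X$. For $f\colon X\to\mathbb R$, $A(f)$ is the set of unordered pairs $\{x,y\}$ ($x=y$ allowed) with $f(x)+f(y)=d(x,y)$; $\Delta(X)=\{f: f(x)+f(y)\ge d(x,y)\ \forall x,y\}$; $\mathrm E'(X)=\{f\in\Delta(X):\bigcup A(f)=X\}$; $\mathscr A(X)=\{A(f): f\in\mathrm E'(X)\}$; $\mathrm{rk}(A)=\dim\{g\in\mathbb R^X: g(x)+g(y)=d(x,y)\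 \forall\{x,y\}\in A\}$. *)

theory Defs
  imports "HOL-Analysis.Analysis" "HOL-Library.Extended_Nat"
begin

text \<open>The metric space X is the whole type 'a, with distance function d.\<close>

definition metric_on :: "('a \<Rightarrow> 'a \<Rightarrow> real) \<Rightarrow> bool" where
  "metric_on d \<longleftrightarrow> (\<forall>x y. d x y = 0 \<longleftrightarrow> x = y) \<and> (\<forall>x y. d x y = d y x)
     \<and> (\<forall>x y z. d x z \<le> d x y + d y z)"

definition discretely_geodesic :: "('a \<Rightarrow> 'a \<Rightarrow> real) \<Rightarrow> bool" where
  "discretely_geodesic d \<longleftrightarrow> (\<forall>x y. d x y \<in> \<int>) \<and>
     (\<forall>x y. \<exists>\<gamma> :: nat \<Rightarrow> 'a. \<gamma> 0 = x \<and> \<gamma> (nat \<lfloor>d x y\<rfloor>) = y \<and>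
        (\<forall>i j. i \<le> nat \<lfloor>d x y\<rfloor> \<longrightarrow> j \<le> nat \<lfloor>d x y\<rfloor> \<longrightarrow>
            d (\<gamma> i) (\<gamma> j) = \<bar>real i - real j\<bar>))"

definition bounded_subsets_finite :: "('a \<Rightarrow> 'a \<Rightarrow> real) \<Rightarrow> bool" where
  "bounded_subsets_finite d \<longleftrightarrow>
     (\<forall>S. (\<exists>c r. \<forall>y\<in>S. d c y \<le> r) \<longrightarrow> finite S)"

definition closed_ball_d :: "('a \<Rightarrow> 'a \<Rightarrow> real) \<Rightarrow> 'a \<Rightarrow> real \<Rightarrow> 'a set" where
  "closed_ball_d d z r = {y. d z y \<le> r}"

definition interval :: "('a \<Rightarrow> 'a \<Rightarrow> real) \<Rightarrow> 'a \<Rightarrow> 'a \<Rightarrow> 'a set" where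
  "interval d x y = {u. d x u + d u y = d x y}"

definition cone :: "('a \<Rightarrow> 'a \<Rightarrow> real) \<Rightarrow> 'a \<Rightarrow> 'a \<Rightarrow> 'a set" where
  "cone d x v = {y. v \<in> interval d x y}"

definition hausdorff_dist :: "('a \<Rightarrow> 'a \<Rightarrow> real) \<Rightarrow> 'a set \<Rightarrow> 'a set \<Rightarrow> ereal" where
  "hausdorff_dist d A B = max (SUP a\<in>A. INF b\<in>B. ereal (d a b)) (SUP b\<in>B. INF a\<in>A. ereal (d a b))"

definition stable_intervals :: "('a \<Rightarrow> 'a \<Rightarrow> real) \<Rightarrow> real \<Rightarrow> bool" where
  "stable_intervals d \<beta> \<longleftrightarrow>
     (\<forall>x y y'. d y y' = 1 \<longrightarrow> hausdorff_dist d (interval d x y) (interval d x y') \<le> ereal \<beta>)"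

definition pointed_cones :: "('a \<Rightarrow> 'a \<Rightarrow> real) \<Rightarrow> 'a set \<Rightarrow> ('a \<times> 'a set) set" where
  "pointed_cones d B = {(v, cone d x v) | v x. v \<in> B}"

text \<open>Unordered pairs {x,y} (x = y allowed) are represented as sets {x,y}.\<close>
definition Apairs :: "('a \<Rightarrow> 'a \<Rightarrow> real) \<Rightarrow> ('a \<Rightarrow> real) \<Rightarrow> 'a set set" where
  "Apairs d f = {{x, y} | x y. f x + f y = d x y}"

definition Delta :: "('a \<Rightarrow> 'a \<Rightarrow> real) \<Rightarrow> ('a \<Rightarrow> real) set" where
  "Delta d = {f. \<forall>x y. f x + f y \<ge> d x y}"

definition Eprime :: "('a \<Rightarrow> 'a \<Rightarrow> real) \<Rightarrow> ('a \<Rightarrow> real) set" where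
  "Eprime d = {f \<in> Delta d. \<Union> (Apairs d f) = UNIV}"

definition Acal :: "('a \<Rightarrow> 'a \<Rightarrow> real) \<Rightarrow> 'a set set set" where
  "Acal d = Apairs d ` Eprime d"

definition fun_lin_indep :: "('a \<Rightarrow> real) set \<Rightarrow> bool" where
  "fun_lin_indep F \<longleftrightarrow> finite F \<and>
     (\<forall>c. (\<forall>x. (\<Sum>g\<in>F. c g * g x) = 0) \<longrightarrow> (\<forall>g\<in>F. c g = 0))"

definition fun_dim :: "('a \<Rightarrow> real) set \<Rightarrow> enat" where
  "fun_dim V = (SUP F\<in>{F. F \<subseteq> V \<and> fun_lin_indep F}. enat (card F))"

definition fun_aff_dim :: "('a \<Rightarrow> real) set \<Rightarrow> enat" where
  "fun_aff_dim S = fun_dim {(\<lambda>x. g x - h x) | g h. g \<in> S \<and> h \<in> S}"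

definition rk :: "('a \<Rightarrow> 'a \<Rightarrow> real) \<Rightarrow> 'a set set \<Rightarrow> enat" where
  "rk d A = fun_aff_dim {g. \<forall>x y. {x, y} \<in> A \<longrightarrow> g x + g y = d x y}"

end

theory Submission
  imports Defs
begin

text \<open>
  If \<open>f\<close> is tight on \<open>{x, y}\<close> and \<open>f z \<le> \<alpha>\<close>, then \<open>d x z + d z y - d x y \<le> 2\<alpha>\<close>, and walking
  from \<open>z\<close> to \<open>y\<close> along a geodesic while following the intervals \<open>I(x, \<cdot>)\<close> by stability
  produces a point \<open>v \<in> I(x, y)\<close> within \<open>2\<alpha>\<beta>\<close> of \<open>z\<close>. The cone \<open>C(x, v)\<close> only depends
  on the increments \<open>d x w - d x v\<close> for \<open>w\<close> in the \<open>\<beta>\<close>-ball around \<open>v\<close>, so there are finitely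
  many pointed cones over \<open>B\<close>; and two points realizing the same pointed cone can be exchanged
  in their tight pairs. Hence a function which is odd on the tight pairs of \<open>f\<close> (and the direction
  space of the solutions is made of such functions) is determined by its values on a set \<open>R\<close> of
  realizers; for a smallest such \<open>R\<close>, every \<open>r \<in> R\<close> and a tight partner of \<open>r\<close> realize
  \<open>2|R|\<close> distinct pointed cones, which gives (1).
  For (2), a rank one \<open>A(f') \<subseteq> A(f)\<close> is determined by the set where \<open>f' > f\<close>, and this set is
  the union of the realizers of those pointed cones all of whose realizers lie in it.
\<close>

lemma Ints_le_if_less_add1:
  fixes p q :: real
  assumes "p \<in> \<int>" "q \<in> \<int>" "p < q + 1"
  shows "p \<le> q"
  using assms by (auto elim!: Ints_cases)

lemma add_eq_0_iff_opposite_signs: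
  fixes a b :: real
  assumes "a \<noteq> 0 \<Longrightarrow> b \<noteq> 0 \<Longrightarrow> \<bar>a\<bar> = \<bar>b\<bar>"
  shows "a + b = 0 \<longleftrightarrow> (0 < a \<and> b < 0) \<or> (a < 0 \<and> 0 < b) \<or> (a = 0 \<and> b = 0)"
  using assms by (cases "a = 0"; cases "b = 0") (auto simp: abs_if split: if_splits)

section \<open>Linear algebra of real-valued functions\<close>

definition independent_on :: "('i \<Rightarrow> 'a \<Rightarrow> real) \<Rightarrow> 'i set \<Rightarrow> 'a set \<Rightarrow> bool" where
  "independent_on G I R \<longleftrightarrow> (\<forall>a. (\<forall>r\<in>R. (\<Sum>i\<in>I. a i * G i r) = 0) \<longrightarrow> (\<forall>i\<in>I. a i = 0))"

lemma independent_on_insert_vanishing: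
  assumes "independent_on G I (insert r0 R)" and "\<forall>i\<in>I. G i r0 = 0"
  shows "independent_on G I R"
  using assms unfolding independent_on_def by simp

lemma independent_on_eliminate:
  fixes G :: "'i \<Rightarrow> 'a \<Rightarrow> real"
  assumes indep: "independent_on G I (insert r0 R)"
    and "finite I" and i0: "i0 \<in> I" "G i0 r0 \<noteq> 0"
  shows "independent_on (\<lambda>i r. G i r - G i r0 / G i0 r0 * G i0 r) (I - {i0}) R"
  unfolding independent_on_def
proof (intro allI impI)
  fix a assume a: "\<forall>r\<in>R. (\<Sum>i\<in>I - {i0}. a i * (G i r - G i r0 / G i0 r0 * G i0 r)) = 0"
  define s where "s = (\<Sum>i\<in>I - {i0}. a i * G i r0)"
  define b where "b = a(i0 := - s / G i0 r0)"
  have b_comb: "(\<Sum>i\<in>I. b i * G i r)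
      = (\<Sum>i\<in>I - {i0}. a i * (G i r - G i r0 / G i0 r0 * G i0 r))" for r
  proof -
    have "(\<Sum>i\<in>I. b i * G i r) = b i0 * G i0 r + (\<Sum>i\<in>I - {i0}. b i * G i r)"
      using i0 \<open>finite I\<close> by (simp add: sum.remove)
    also have "(\<Sum>i\<in>I - {i0}. b i * G i r) = (\<Sum>i\<in>I - {i0}. a i * G i r)"
      unfolding b_def by (intro sum.cong) auto
    also have "b i0 * G i0 r = - (s * (G i0 r / G i0 r0))"
      by (simp add: b_def)
    also have "(\<Sum>i\<in>I - {i0}. a i * G i r) = (\<Sum>i\<in>I - {i0}. a i * (G i r
        - G i r0 / G i0 r0 * G i0 r)) + s * (G i0 r / G i0 r0)"
      unfolding s_def sum_distrib_right sum.distrib[symmetric]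
      by (intro sum.cong) (simp_all add: algebra_simps)
    finally show ?thesis by simp
  qed
  have "(\<Sum>i\<in>I. b i * G i r) = 0" if "r \<in> insert r0 R" for r
    using that a i0(2) by (auto simp: b_comb)
  then have "\<forall>i\<in>I. b i = 0"
    using indep unfolding independent_on_def by blast
  then show "\<forall>i\<in>I - {i0}. a i = 0"
    unfolding b_def by (metis DiffE fun_upd_other singletonI)
qed

lemma independent_on_card_le:
  assumes "finite R"
  shows "finite I \<Longrightarrow> independent_on G I R \<Longrightarrow> card I \<le> card R"
  using assms
proof (induction R arbitrary: I G rule: finite_induct)
  case empty
  have "\<forall>i\<in>I. (1::real) = 0"
    using empty.prems(2)[unfolded independent_on_def, rule_format, of "\<lambda>_. 1"] by blast
  then have "I = {}" by fastforce
  then show ?case by simp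
next
  case (insert r0 R)
  show ?case
  proof (cases "\<exists>i0\<in>I. G i0 r0 \<noteq> 0")
    case False
    then have "independent_on G I R"
      using independent_on_insert_vanishing[OF insert.prems(2)] by simp
    then have "card I \<le> card R" by (rule insert.IH[OF insert.prems(1)])
    then show ?thesis using insert.hyps by simp
  next
    case True
    then obtain i0 where i0: "i0 \<in> I" "G i0 r0 \<noteq> 0" by blast
    have "finite (I - {i0})" using insert.prems(1) by simp
    then have "card (I - {i0}) \<le> card R"
      by (rule insert.IH[OF _ independent_on_eliminate[OF insert.prems(2,1) i0]])
    then show ?thesis
      using i0 insert.prems(1) insert.hyps by (simp add: card_Diff_singleton)
  qed
qed

lemma two_le_fun_dim:
  assumes "k \<in> V" "k' \<in> V" "k u \<noteq> 0" "k' u = 0" "k' v \<noteq> 0"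
  shows "2 \<le> fun_dim V"
proof -
  have "k \<noteq> k'" using assms by metis
  have "fun_lin_indep {k, k'}"
    unfolding fun_lin_indep_def
  proof (intro conjI allI impI)
    fix c assume "\<forall>x. (\<Sum>g\<in>{k, k'}. c g * g x) = 0"
    then have comb: "c k * k x + c k' * k' x = 0" for x
      using \<open>k \<noteq> k'\<close> by simp
    have "c k = 0" using comb[of u] assms by simp
    moreover have "c k' = 0" using comb[of v] assms \<open>c k = 0\<close> by simp
    ultimately show "\<forall>g\<in>{k, k'}. c g = 0" by blast
  qed simp
  then have "enat (card {k, k'}) \<le> fun_dim V"
    unfolding fun_dim_def using assms by (intro SUP_upper) auto
  then show ?thesis
    using \<open>k \<noteq> k'\<close> by (simp add: numeral_eq_enat numeral_2_eq_2)
qed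

text \<open>The direction space of the solutions of \<open>A\<close> consists of functions odd on \<open>A\<close>.\<close>

lemma rk_le:
  assumes "\<And>F. fun_lin_indep F \<Longrightarrow> \<forall>k\<in>F. \<forall>x y. {x, y} \<in> A \<longrightarrow> k x + k y = 0 \<Longrightarrow> card F \<le> n"
  shows "rk d A \<le> enat n"
  unfolding rk_def fun_aff_dim_def fun_dim_def
proof (rule SUP_least)
  fix F assume F: "F \<in> {F. F \<subseteq> {\<lambda>x. g x - h x |g h.
      g \<in> {g. \<forall>x y. {x, y} \<in> A \<longrightarrow> g x + g y = d x y} \<and>
      h \<in> {g. \<forall>x y. {x, y} \<in> A \<longrightarrow> g x + g y = d x y}} \<and> fun_lin_indep F}"
  have "\<forall>k\<in>F. \<forall>x y. {x, y} \<in> A \<longrightarrow> k x + k y = 0"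
  proof (intro ballI allI impI)
    fix k x y assume "k \<in> F" "{x, y} \<in> A"
    then obtain g h where "k = (\<lambda>x. g x - h x)" "g x + g y = d x y" "h x + h y = d x y"
      using F by blast
    then show "k x + k y = 0" by simp
  qed
  then show "enat (card F) \<le> enat n" using F assms by simp
qed

lemma two_le_rk:
  fixes k k' :: "'a \<Rightarrow> real"
  assumes "\<forall>x y. {x, y} \<in> A \<longrightarrow> g x + g y = d x y"
    and "\<forall>x y. {x, y} \<in> A \<longrightarrow> k x + k y = 0" "\<forall>x y. {x, y} \<in> A \<longrightarrow> k' x + k' y = 0"
    and "k u \<noteq> 0" "k' u = 0" "k' v \<noteq> 0"
  shows "2 \<le> rk d A"
proof -
  define S where "S = {g. \<forall>x y. {x, y} \<in> A \<longrightarrow> g x + g y = d x y}"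
  have direction: "e \<in> {\<lambda>x. g x - h x |g h. g \<in> S \<and> h \<in> S}"
    if odd: "\<forall>x y. {x, y} \<in> A \<longrightarrow> e x + e y = 0" for e
  proof -
    have "(\<lambda>x. g x + e x) \<in> S"
      unfolding S_def
    proof (intro CollectI allI impI)
      fix x y assume "{x, y} \<in> A"
      then have "g x + g y = d x y" "e x + e y = 0" using assms(1) odd by blast+
      then show "g x + e x + (g y + e y) = d x y" by linarith
    qed
    moreover have "g \<in> S" using assms(1) unfolding S_def by blast
    ultimately show ?thesis
      unfolding mem_Collect_eq by (intro exI[of _ "\<lambda>x. g x + e x"] exI[of _ g]) simp
  qed
  show ?thesis
    unfolding rk_def fun_aff_dim_def S_def[symmetric]
    by (rule two_le_fun_dim[OF direction[OF assms(2)] direction[OF assms(3)] assms(4-6)])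
qed

section \<open>Discretely geodesic spaces with stable intervals\<close>

locale stable_geodesic_space =
  fixes d :: "'a \<Rightarrow> 'a \<Rightarrow> real" and \<beta> :: real
  assumes metric: "metric_on d" and geodesic: "discretely_geodesic d"
    and stable: "stable_intervals d \<beta>" and bounded_finite: "bounded_subsets_finite d"
begin

lemma d_self [simp]: "d x x = 0"
  and d_eq_0_iff: "d x y = 0 \<longleftrightarrow> x = y"
  and d_commute: "d x y = d y x"
  and d_triangle: "d x z \<le> d x y + d y z"
  using metric unfolding metric_on_def by auto

lemma d_nonneg: "0 \<le> d x y"
  using d_triangle[of x x y] d_commute[of x y] by simp

lemma d_Ints: "d x y \<in> \<int>"
  using geodesic unfolding discretely_geodesic_def by auto

lemma real_nat_floor_d: "real (nat \<lfloor>d x y\<rfloor>) = d x y"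
  using d_Ints d_nonneg by simp

lemma finite_ball: "finite {w. d v w \<le> r}"
  using bounded_finite unfolding bounded_subsets_finite_def by (metis mem_Collect_eq)

lemma interval_commute: "interval d x y = interval d y x"
  unfolding interval_def using d_commute by (auto simp: add.commute)

lemma left_mem_interval [simp]: "x \<in> interval d x y"
  and right_mem_interval [simp]: "y \<in> interval d x y"
  unfolding interval_def by simp_all

lemma finite_interval: "finite (interval d x y)"
proof -
  have "d x u \<le> d x y" if "u \<in> interval d x y" for u
  proof -
    have "d x u + d u y = d x y" using that by (simp add: interval_def)
    with d_nonneg[of u y] show ?thesis by linarith
  qed
  then have "interval d x y \<subseteq> {u. d x u \<le> d x y}" by blast
  then show ?thesis using finite_ball finite_subset by blast
qed

lemma interval_subset:
  assumes "y' \<in> interval d x y"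
  shows "interval d x y' \<subseteq> interval d x y"
proof
  fix u assume "u \<in> interval d x y'"
  moreover have "d u y \<le> d u y' + d y' y" "d x y \<le> d x u + d u y" by (rule d_triangle)+
  ultimately show "u \<in> interval d x y" using assms by (simp add: interval_def)
qed

lemma stable_intervalsE:
  assumes "d y y' = 1" "u \<in> interval d x y"
  obtains u' where "u' \<in> interval d x y'" "d u u' \<le> \<beta>"
proof -
  let ?D = "(\<lambda>b. ereal (d u b)) ` interval d x y'"
  have "hausdorff_dist d (interval d x y) (interval d x y') \<le> ereal \<beta>"
    using stable assms(1) unfolding stable_intervals_def by blast
  then have Inf_le: "Inf ?D \<le> ereal \<beta>"
    using assms(2) unfolding hausdorff_dist_def by (meson SUP_le_iff max.boundedE)
  have "finite ?D" "?D \<noteq> {}"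
    using finite_interval left_mem_interval[of x y'] by blast+
  then have "Inf ?D \<in> ?D"
    using Min_in Min_Inf by metis
  then obtain u' where u': "u' \<in> interval d x y'" "Inf ?D = ereal (d u u')" by blast
  have "d u u' \<le> \<beta>" using u'(2) Inf_le by (metis ereal_less_eq(3))
  with u'(1) show ?thesis by (rule that)
qed

lemma exists_predecessor:
  assumes "d v y = real (Suc n)"
  obtains y' where "d v y' = real n" "d y' y = 1"
proof -
  obtain \<gamma> where \<gamma>: "\<gamma> 0 = v" "\<gamma> (nat \<lfloor>d v y\<rfloor>) = y"
    "\<forall>i j. i \<le> nat \<lfloor>d v y\<rfloor> \<longrightarrow> j \<le> nat \<lfloor>d v y\<rfloor> \<longrightarrow> d (\<gamma> i) (\<gamma> j) = \<bar>real i - real j\<bar>"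
    using geodesic unfolding discretely_geodesic_def by blast
  have "nat \<lfloor>d v y\<rfloor> = Suc n"
    using real_nat_floor_d[of v y] assms by simp
  then have "d (\<gamma> 0) (\<gamma> n) = real n" "d (\<gamma> n) (\<gamma> (Suc n)) = 1"
    using \<gamma>(3)[rule_format, of 0 n] \<gamma>(3)[rule_format, of n "Suc n"] by simp_all
  then show ?thesis
    using that \<gamma>(1,2) \<open>nat \<lfloor>d v y\<rfloor> = Suc n\<close> by simp
qed

lemma radial_induct [case_names centre step]:
  assumes "P v"
    and "\<And>y y'. d v y' = d v y + 1 \<Longrightarrow> d y y' = 1 \<Longrightarrow> P y \<Longrightarrow> P y'"
  shows "P y"
proof -
  have "\<forall>y. d v y = real n \<longrightarrow> P y" for n
  proof (induction n)
    case 0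
    then show ?case using assms(1) by (auto simp: d_eq_0_iff)
  next
    case (Suc n)
    show ?case
    proof (intro allI impI)
      fix y assume "d v y = real (Suc n)"
      then obtain y' where "d v y' = real n" "d y' y = 1" by (rule exists_predecessor)
      moreover have "d v y = d v y' + 1" using \<open>d v y = real (Suc n)\<close> calculation by simp
      ultimately show "P y" using Suc.IH assms(2) by blast
    qed
  qed
  then show ?thesis using real_nat_floor_d by metis
qed

lemma beta_nonneg:
  fixes x y :: 'a
  assumes "x \<noteq> y"
  shows "0 \<le> \<beta>"
proof -
  have "d x y \<noteq> 0" using assms d_eq_0_iff by simp
  then obtain n where "d x y = real (Suc n)"
    using real_nat_floor_d[of x y] by (metis of_nat_0 not0_implies_Suc)
  then obtain y' where "d y' y = 1" by (rule exists_predecessor)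
  then obtain u where "d y' u \<le> \<beta>"
    using stable_intervalsE[of y' y y' y'] by auto
  then show ?thesis using d_nonneg[of y' u] by linarith
qed

lemma interval_step:
  assumes "0 \<le> \<beta>" "d y y' = 1" "v \<in> interval d x y"
  obtains v' where "v' \<in> interval d x y'" "d v v' \<le> \<beta> * (d x y + 1 - d x y')"
proof (cases "d x y' = d x y + 1")
  case True
  then have "y \<in> interval d x y'" using assms(2) by (simp add: interval_def)
  then have "v \<in> interval d x y'" using assms(3) interval_subset by blast
  moreover have "d v v \<le> \<beta> * (d x y + 1 - d x y')" using True by simp
  ultimately show ?thesis by (rule that)
next
  case False
  have "d x y' \<le> d x y + 1" using d_triangle[of x y' y] assms(2) by simp
  then have "d x y' \<le> d x y"
    using False Ints_le_if_less_add1 d_Ints by fastforce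
  then have "\<beta> \<le> \<beta> * (d x y + 1 - d x y')"
    using mult_left_mono[of 1 "d x y + 1 - d x y'" \<beta>] assms(1) by simp
  moreover obtain v' where "v' \<in> interval d x y'" "d v v' \<le> \<beta>"
    using stable_intervalsE[OF assms(2,3)] .
  ultimately show ?thesis
    using that[of v'] by linarith
qed

text \<open>The excess \<open>d x z + d z y - d x y\<close> is what stability has to pay for along a geodesic from \<open>z\<close>.\<close>

lemma interval_near:
  assumes "0 \<le> \<beta>"
  shows "\<exists>v\<in>interval d x y. d z v \<le> \<beta> * (d x z + d z y - d x y)"
proof (induction y rule: radial_induct[where v = z])
  case centre
  show ?case by (rule bexI[of _ z]) simp_all
next
  case (step y y')
  then obtain v where v: "v \<in> interval d x y" "d z v \<le> \<beta> * (d x z + d z y - d x y)" by blast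
  obtain v' where v': "v' \<in> interval d x y'" "d v v' \<le> \<beta> * (d x y + 1 - d x y')"
    using interval_step[OF assms step(2) v(1)] .
  have "d z v' \<le> d z v + d v v'" by (rule d_triangle)
  also have "\<dots> \<le> \<beta> * (d x z + d z y - d x y) + \<beta> * (d x y + 1 - d x y')"
    using v(2) v'(2) by linarith
  also have "\<dots> = \<beta> * (d x z + d z y' - d x y')"
    using step(1) by (simp add: algebra_simps)
  finally show ?case using v'(1) by blast
qed

lemma tight_interval_meets_ball:
  assumes "0 \<le> \<beta>" "f \<in> Delta d" "f x + f y = d x y" "f z \<le> \<alpha>"
  shows "\<exists>v\<in>interval d x y. v \<in> closed_ball_d d z (2 * \<alpha> * \<beta>)"
proof -
  obtain v where v: "v \<in> interval d x y" "d z v \<le> \<beta> * (d x z + d z y - d x y)"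
    using interval_near[OF assms(1)] by blast
  have "d x z + d z y - d x y \<le> 2 * \<alpha>"
    using assms(2-4) d_commute[of z y] unfolding Delta_def by (smt (verit) mem_Collect_eq)
  then have "d z v \<le> 2 * \<alpha> * \<beta>"
    using v(2) mult_left_mono[OF _ assms(1)] by (smt (verit) mult.commute mult.assoc)
  then show ?thesis using v(1) unfolding closed_ball_d_def by auto
qed

lemma mem_cone_iff: "y \<in> cone d x v \<longleftrightarrow> d x v + d v y = d x y"
  unfolding cone_def interval_def by simp

lemma cone_subset_if_same_increments:
  assumes incr: "\<forall>w. d v w \<le> \<beta> \<longrightarrow> d x w - d x v = d x' w - d x' v"
  shows "cone d x v \<subseteq> cone d x' v"
proof
  fix y show "y \<in> cone d x v \<Longrightarrow> y \<in> cone d x' v"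
  proof (induction y rule: radial_induct[where v = v])
    case centre
    show ?case by (simp add: mem_cone_iff)
  next
    case (step y y')
    have y'_cone: "d x v + d v y' = d x y'" using step.prems by (simp add: mem_cone_iff)
    have "d x y \<le> d x v + d v y" "d x y' \<le> d x y + d y y'" by (rule d_triangle)+
    then have "d x v + d v y = d x y" using y'_cone step(1,2) by linarith
    then have "y \<in> cone d x' v" using step.IH by (simp add: mem_cone_iff)
    then have "v \<in> interval d x' y" by (simp add: cone_def)
    then obtain u where u: "u \<in> interval d x' y'" "d v u \<le> \<beta>"
      using stable_intervalsE[OF step(2)] by blast
    have "d x' u + d u y' = d x' y'" using u(1) by (simp add: interval_def)
    moreover have "d x u - d x v = d x' u - d x' v" using incr u(2) by blast
    moreover have "d x y' \<le> d x u + d u y'" "d x' y' \<le> d x' v + d v y'" by (rule d_triangle)+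
    ultimately have "d x' v + d v y' = d x' y'" using y'_cone by linarith
    then show ?case by (simp add: mem_cone_iff)
  qed
qed

lemma finite_cones_at: "finite (range (\<lambda>x. cone d x v))"
proof -
  define W where "W = {w. d v w \<le> \<beta>}"
  define K where "K = {k::real \<in> \<int>. \<bar>k\<bar> \<le> \<beta>}"
  define incr where "incr x = restrict (\<lambda>w. d x w - d x v) W" for x
  have "incr x \<in> PiE W (\<lambda>_. K)" for x
  proof -
    have "\<bar>d x w - d x v\<bar> \<le> \<beta>" if "w \<in> W" for w
      using that d_triangle[of x v w] d_triangle[of x w v] d_commute[of v w]
      unfolding W_def by auto
    then show ?thesis unfolding incr_def K_def using d_Ints by auto
  qed
  moreover have "finite (PiE W (\<lambda>_. K))"
    unfolding W_def K_def using finite_ball finite_abs_int_segment by (intro finite_PiE) auto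
  moreover have "cone d x v = cone d (SOME x'. incr x' = incr x) v" for x
  proof -
    have "incr (SOME x'. incr x' = incr x) = incr x" by (rule someI) simp
    then have "\<forall>w. d v w \<le> \<beta> \<longrightarrow> d x w - d x v = d (SOME x'. incr x' = incr x) w
        - d (SOME x'. incr x' = incr x) v"
      unfolding incr_def W_def by (metis (mono_tags, lifting) mem_Collect_eq restrict_apply')
    then show ?thesis
      using cone_subset_if_same_increments by (metis subset_antisym)
  qed
  ultimately have "range (\<lambda>x. cone d x v) \<subseteq> (\<lambda>k. cone d (SOME x. incr x = k) v) ` PiE W (\<lambda>_. K)"
    by blast
  then show ?thesis
    using \<open>finite (PiE W (\<lambda>_. K))\<close> finite_surj by blast
qed

lemma finite_pointed_cones:
  assumes "finite B"
  shows "finite (pointed_cones d B)"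
proof -
  have "pointed_cones d B \<subseteq> Sigma B (\<lambda>v. range (\<lambda>x. cone d x v))"
    unfolding pointed_cones_def by auto
  then show ?thesis
    using assms finite_cones_at finite_subset by blast
qed

lemma doubleton_mem_Apairs_iff: "{x, y} \<in> Apairs d g \<longleftrightarrow> g x + g y = d x y"
  unfolding Apairs_def using d_commute by (auto simp: doubleton_eq_iff add.commute)

lemma Eprime_le: "g \<in> Eprime d \<Longrightarrow> d x y \<le> g x + g y"
  unfolding Eprime_def Delta_def by auto

lemma Eprime_tight_partner:
  assumes "g \<in> Eprime d"
  obtains y where "g x + g y = d x y"
proof -
  have "x \<in> \<Union> (Apairs d g)" using assms unfolding Eprime_def by auto
  then show ?thesis
    using that d_commute unfolding Apairs_def by (auto simp: add.commute)
qed

lemma tight_exchange: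
  assumes "\<And>a b. d a b \<le> f a + f b"
    and "f x + f y = d x y" "v \<in> interval d x y"
    and "f x' + f y' = d x' y'" "v \<in> interval d x' y'"
    and "cone d x v = cone d x' v"
  shows "f x' + f y = d x' y"
proof -
  have "y \<in> cone d x' v" "y' \<in> cone d x v"
    using assms(3,5,6) unfolding cone_def by auto
  then have "d x' v + d v y = d x' y" "d x v + d v y' = d x y'"
    by (simp_all add: mem_cone_iff)
  moreover have "d x v + d v y = d x y" "d x' v + d v y' = d x' y'"
    using assms(3,5) by (auto simp: interval_def)
  moreover have "d x' y \<le> f x' + f y" "d x y' \<le> f x + f y'" using assms(1) by auto
  ultimately show ?thesis using assms(2,4) by linarith
qed

end

section \<open>Points of the tight span near a base point\<close>

locale tight_span_point = stable_geodesic_space +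
  fixes f :: "'a \<Rightarrow> real" and \<alpha> :: real and z :: 'a
  assumes f_Eprime: "f \<in> Eprime d" and f_z: "f z \<le> \<alpha>"
begin

abbreviation "B \<equiv> closed_ball_d d z (2 * \<alpha> * \<beta>)"
abbreviation "Q \<equiv> pointed_cones d B"
abbreviation "tight x y \<equiv> f x + f y = d x y"

definition realizes :: "'a \<times> 'a set \<Rightarrow> 'a \<Rightarrow> bool" where
  "realizes c x \<longleftrightarrow> (\<exists>y v. tight x y \<and> v \<in> B \<and> v \<in> interval d x y \<and> c = (v, cone d x v))"

definition tight_odd :: "('a \<Rightarrow> real) \<Rightarrow> bool" where
  "tight_odd h \<longleftrightarrow> (\<forall>x y. tight x y \<longrightarrow> h x + h y = 0)"

definition determining :: "'a set \<Rightarrow> bool" where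
  "determining R \<longleftrightarrow> finite R \<and> (\<forall>h. tight_odd h \<longrightarrow> (\<forall>r\<in>R. h r = 0) \<longrightarrow> (\<forall>x. h x = 0))"

lemma finite_Q: "finite Q"
  using finite_pointed_cones finite_ball unfolding closed_ball_d_def by blast

lemma realizes_in_Q: "realizes c x \<Longrightarrow> c \<in> Q"
  unfolding realizes_def pointed_cones_def by blast

lemma tight_realizes:
  assumes "0 \<le> \<beta>" "tight x y"
  obtains v where "v \<in> interval d x y" "realizes (v, cone d x v) x" "realizes (v, cone d y v) y"
proof -
  obtain v where "v \<in> interval d x y" "v \<in> B"
    using tight_interval_meets_ball[OF assms(1) _ assms(2) f_z] f_Eprime
    unfolding Eprime_def by blast
  then show ?thesis
    using that assms(2) interval_commute d_commute unfolding realizes_def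
    by (metis add.commute)
qed

lemma realizes_exchange:
  assumes "realizes c x" "realizes c x'" "tight x' y'" "fst c \<in> interval d x' y'"
  shows "tight x y'"
proof -
  obtain y v where "tight x y" "v \<in> interval d x y" "c = (v, cone d x v)"
    using assms(1) unfolding realizes_def by blast
  moreover have "cone d x' v = cone d x v"
    using assms(2) \<open>c = (v, cone d x v)\<close> unfolding realizes_def by auto
  ultimately show ?thesis
    using tight_exchange[OF Eprime_le[OF f_Eprime] assms(3) _ \<open>tight x y\<close>] assms(4) by simp
qed

lemma tight_odd_realizes_eq:
  assumes "tight_odd h" "realizes c x" "realizes c x'"
  shows "h x = h x'"
proof -
  obtain y' v where "tight x' y'" "v \<in> interval d x' y'" "c = (v, cone d x' v)"
    using assms(3) unfolding realizes_def by blast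
  then have "tight x y'" using realizes_exchange[OF assms(2,3)] by simp
  then show ?thesis
    using assms(1) \<open>tight x' y'\<close> unfolding tight_odd_def by (metis add_right_cancel)
qed

lemma card_independent_le_determining:
  assumes "determining R" "fun_lin_indep F" "\<forall>k\<in>F. tight_odd k"
  shows "card F \<le> card R"
proof -
  have "independent_on (\<lambda>g. g) F R"
    unfolding independent_on_def
  proof (intro allI impI)
    fix a assume "\<forall>r\<in>R. (\<Sum>g\<in>F. a g * g r) = 0"
    moreover have "tight_odd (\<lambda>x. \<Sum>g\<in>F. a g * g x)"
      using assms(3) unfolding tight_odd_def
      by (simp add: sum.distrib[symmetric] distrib_left[symmetric])
    ultimately show "\<forall>g\<in>F. a g = 0"
      using assms(1,2) unfolding determining_def fun_lin_indep_def by blast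
  qed
  then show ?thesis
    using assms(1,2) independent_on_card_le unfolding determining_def fun_lin_indep_def by blast
qed

lemma determining_empty_if_beta_neg:
  assumes "\<beta> < 0"
  shows "determining {}"
  unfolding determining_def tight_odd_def
proof (intro conjI allI impI)
  fix h :: "'a \<Rightarrow> real" and x assume h: "\<forall>x y. tight x y \<longrightarrow> h x + h y = 0"
  obtain y where "tight x y" using Eprime_tight_partner[OF f_Eprime] .
  moreover have "y = x" using beta_nonneg assms by force
  ultimately have "h x + h x = 0" using h by blast
  then show "h x = 0" by linarith
qed simp

lemma determining_exists: "\<exists>R. determining R"
proof (cases "0 \<le> \<beta>")
  case True
  have "\<exists>c. realizes c x" for x
    using tight_realizes[OF True] Eprime_tight_partner[OF f_Eprime] by metis
  define R where "R = (\<lambda>c. SOME x. realizes c x) ` Q"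
  have "determining R"
    unfolding determining_def
  proof (intro conjI allI impI)
    show "finite R" using finite_Q by (simp add: R_def)
    fix h x assume h: "tight_odd h" "\<forall>r\<in>R. h r = 0"
    obtain c where c: "realizes c x" using \<open>\<exists>c. realizes c x\<close> ..
    then have "realizes c (SOME x. realizes c x)" by (rule someI)
    moreover have "(SOME x. realizes c x) \<in> R" using realizes_in_Q[OF c] by (simp add: R_def)
    ultimately show "h x = 0" using tight_odd_realizes_eq[OF h(1) c] h(2) by simp
  qed
  then show ?thesis by blast
qed (use determining_empty_if_beta_neg in auto)

lemma determining_Diff:
  assumes "determining R"
    and "\<And>h. tight_odd h \<Longrightarrow> \<forall>s\<in>R - {r}. h s = 0 \<Longrightarrow> h r = 0"
  shows "determining (R - {r})"
  using assms unfolding determining_def by (metis Diff_iff finite_Diff singletonD)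

text \<open>
  Each point \<open>r\<close> of \<open>R\<close> and a tight partner of \<open>r\<close> realize pointed cones; if two of these
  \<open>2|R|\<close> cones coincided, the values on \<open>R - {r}\<close> would already determine \<open>h r\<close>.
\<close>

lemma minimal_determining_card:
  assumes R: "determining R" and minimal: "\<And>R'. determining R' \<Longrightarrow> card R \<le> card R'"
  shows "2 * card R \<le> card Q"
proof (cases "0 \<le> \<beta>")
  case False
  then show ?thesis using minimal[OF determining_empty_if_beta_neg] by simp
next
  case True
  have "\<exists>y v. tight r y \<and> realizes (v, cone d r v) r \<and> realizes (v, cone d y v) y" for r
    using tight_realizes[OF True] Eprime_tight_partner[OF f_Eprime] by metis
  then obtain partner centre where partner: "\<And>r. tight r (partner r)"
    and realized: "\<And>r. realizes (centre r, cone d r (centre r)) r"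
      "\<And>r. realizes (centre r, cone d (partner r) (centre r)) (partner r)"
    by metis
  define \<kappa> where "\<kappa> = (\<lambda>(r, b). (centre r, cone d (if b then r else partner r) (centre r)))"
  define \<rho> where "\<rho> = (\<lambda>(r, b). if b then r else partner r)"
  have realizes_\<kappa>: "realizes (\<kappa> p) (\<rho> p)" for p
    using realized unfolding \<kappa>_def \<rho>_def by (cases p) auto
  have h_\<rho>: "h (\<rho> (r, b)) = (if b then h r else - h r)" if "tight_odd h" for h r b
  proof -
    have "h r + h (partner r) = 0" using that partner[of r] unfolding tight_odd_def by blast
    then show ?thesis unfolding \<rho>_def by auto
  qed
  have "inj_on \<kappa> (R \<times> UNIV)"
  proof (rule inj_onI, rule ccontr)
    fix p q assume "p \<in> R \<times> UNIV" "q \<in> R \<times> UNIV" "\<kappa> p = \<kappa> q" "p \<noteq> q"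
    then obtain r i r' j where pq: "p = (r, i)" "q = (r', j)" "r \<in> R" "r' \<in> R" by auto
    have "determining (R - {r})"
    proof (rule determining_Diff[OF R])
      fix h assume h: "tight_odd h" "\<forall>s\<in>R - {r}. h s = 0"
      have "h (\<rho> p) = h (\<rho> q)"
        using tight_odd_realizes_eq[OF h(1) realizes_\<kappa>[of p]] realizes_\<kappa>[of q] \<open>\<kappa> p = \<kappa> q\<close> by simp
      then show "h r = 0"
        using h \<open>p \<noteq> q\<close> pq h_\<rho>[OF h(1)] by (cases i; cases j; cases "r' = r") auto
    qed
    then show False
      using minimal card_Diff1_less[OF _ \<open>r \<in> R\<close>] R unfolding determining_def
      by (metis not_le)
  qed
  moreover have "\<kappa> ` (R \<times> UNIV) \<subseteq> Q" using realizes_\<kappa> realizes_in_Q by blast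
  ultimately have "card (R \<times> (UNIV :: bool set)) \<le> card Q"
    using card_inj_on_le finite_Q by blast
  then show ?thesis by (simp add: card_cartesian_product)
qed

lemma twice_rk_le_card_Q: "2 * rk d (Apairs d f) \<le> enat (card Q)"
proof -
  obtain R where R: "determining R" and minimal: "\<And>R'. determining R' \<Longrightarrow> card R \<le> card R'"
    using determining_exists ex_has_least_nat[of determining _ card] by metis
  have "rk d (Apairs d f) \<le> enat (card R)"
  proof (rule rk_le)
    fix F :: "('a \<Rightarrow> real) set"
    assume F: "fun_lin_indep F" "\<forall>k\<in>F. \<forall>x y. {x, y} \<in> Apairs d f \<longrightarrow> k x + k y = 0"
    then have "\<forall>k\<in>F. tight_odd k"
      by (simp add: tight_odd_def doubleton_mem_Apairs_iff)
    with F(1) show "card F \<le> card R"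
      by (rule card_independent_le_determining[OF R])
  qed
  then have "2 * rk d (Apairs d f) \<le> enat (2 * card R)"
    by (metis mult_left_mono numeral_eq_enat times_enat_simps(1) zero_le)
  also have "\<dots> \<le> enat (card Q)"
    using minimal_determining_card[OF R minimal] by simp
  finally show ?thesis .
qed

definition excess_set :: "('a \<Rightarrow> real) \<Rightarrow> 'a set" where
  "excess_set g = {x. f x < g x}"

definition partners_within :: "'a set \<Rightarrow> 'a set" where
  "partners_within P = {x. \<forall>y. tight x y \<longrightarrow> y \<in> P}"

definition cone_signature :: "'a set \<Rightarrow> ('a \<times> 'a set) set" where
  "cone_signature P = {c \<in> Q. (\<exists>x. realizes c x) \<and> (\<forall>x. realizes c x \<longrightarrow> x \<in> P)}"

context
  fixes g :: "'a \<Rightarrow> real"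
  assumes g_Eprime: "g \<in> Eprime d" and g_sub: "Apairs d g \<subseteq> Apairs d f"
begin

lemma tight_if_g_tight: "g x + g y = d x y \<Longrightarrow> tight x y"
  using g_sub doubleton_mem_Apairs_iff by blast

lemma excess_sum_nonneg: "tight x y \<Longrightarrow> 0 \<le> (g x - f x) + (g y - f y)"
  using Eprime_le[OF g_Eprime, of x y] by linarith

lemma excess_sum_zero: "g x + g y = d x y \<Longrightarrow> (g x - f x) + (g y - f y) = 0"
  using tight_if_g_tight[of x y] by linarith

text \<open>On each level set of \<open>\<bar>g - f\<bar>\<close>, adding \<open>sgn (g - f)\<close> to \<open>g\<close> keeps all equations of \<open>A(g)\<close>.\<close>

lemma abs_excess_eq_if_rk_1:
  assumes "rk d (Apairs d g) = 1" "g x1 \<noteq> f x1" "g x2 \<noteq> f x2"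
  shows "\<bar>g x1 - f x1\<bar> = \<bar>g x2 - f x2\<bar>"
proof (rule ccontr)
  assume ne: "\<bar>g x1 - f x1\<bar> \<noteq> \<bar>g x2 - f x2\<bar>"
  define k where "k t x = (if \<bar>g x - f x\<bar> = t then sgn (g x - f x) else 0)" for t x
  have sol: "\<forall>x y. {x, y} \<in> Apairs d g \<longrightarrow> g x + g y = d x y"
    using doubleton_mem_Apairs_iff by blast
  have odd: "\<forall>x y. {x, y} \<in> Apairs d g \<longrightarrow> k t x + k t y = 0" for t
  proof (intro allI impI)
    fix x y assume "{x, y} \<in> Apairs d g"
    then have e: "g y - f y = - (g x - f x)"
      using excess_sum_zero doubleton_mem_Apairs_iff by fastforce
    have "k t y = - k t x" unfolding k_def e abs_minus_cancel sgn_minus by simp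
    then show "k t x + k t y = 0" by simp
  qed
  have "k \<bar>g x1 - f x1\<bar> x1 \<noteq> 0" "k \<bar>g x2 - f x2\<bar> x1 = 0" "k \<bar>g x2 - f x2\<bar> x2 \<noteq> 0"
    using assms(2,3) ne unfolding k_def by (auto simp: sgn_eq_0_iff)
  then have "2 \<le> rk d (Apairs d g)" by (rule two_le_rk[OF sol odd odd])
  then show False using assms(1) by (simp add: one_enat_def numeral_eq_enat)
qed

lemma partners_within_excess_set: "partners_within (excess_set g) = {x. g x < f x}"
proof (intro set_eqI iffI)
  fix x assume x: "x \<in> partners_within (excess_set g)"
  obtain y where "g x + g y = d x y" using Eprime_tight_partner[OF g_Eprime] .
  then show "x \<in> {x. g x < f x}"
    using x excess_sum_zero tight_if_g_tight unfolding partners_within_def excess_set_def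
    by fastforce
next
  fix x assume "x \<in> {x. g x < f x}"
  then show "x \<in> partners_within (excess_set g)"
    using excess_sum_nonneg unfolding partners_within_def excess_set_def by fastforce
qed

lemma g_tight_iff_sign_pattern:
  assumes "rk d (Apairs d g) = 1"
  defines "P \<equiv> excess_set g"
  shows "g x + g y = d x y \<longleftrightarrow> tight x y \<and>
    (x \<in> P \<and> y \<in> partners_within P \<or> x \<in> partners_within P \<and> y \<in> P \<or>
     x \<notin> P \<union> partners_within P \<and> y \<notin> P \<union> partners_within P)"
proof -
  have "g x + g y = d x y \<longleftrightarrow> tight x y \<and> (g x - f x) + (g y - f y) = 0"
    using tight_if_g_tight[of x y] by argo
  also have "(g x - f x) + (g y - f y) = 0 \<longleftrightarrow> (0 < g x - f x \<and> g y - f y < 0)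
      \<or> (g x - f x < 0 \<and> 0 < g y - f y) \<or> (g x - f x = 0 \<and> g y - f y = 0)"
    using abs_excess_eq_if_rk_1[OF assms(1), of x y] by (intro add_eq_0_iff_opposite_signs) simp
  finally show ?thesis
    unfolding P_def partners_within_excess_set unfolding excess_set_def mem_Collect_eq Un_iff by argo
qed

lemma excess_set_realized:
  assumes "x \<in> excess_set g"
  shows "\<exists>c\<in>cone_signature (excess_set g). realizes c x"
proof -
  obtain y where y: "g x + g y = d x y" using Eprime_tight_partner[OF g_Eprime] .
  have "g y < f y" using excess_sum_zero[OF y] assms by (simp add: excess_set_def)
  then have "x \<noteq> y" using assms by (auto simp: excess_set_def)
  then have "0 \<le> \<beta>" by (rule beta_nonneg)
  have "tight x y" using tight_if_g_tight[OF y] .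
  then obtain v where v: "v \<in> interval d x y" "realizes (v, cone d x v) x"
    using tight_realizes[OF \<open>0 \<le> \<beta>\<close>] by metis
  have "x' \<in> excess_set g" if "realizes (v, cone d x v) x'" for x'
  proof -
    have "tight x' y" using realizes_exchange[OF that v(2) \<open>tight x y\<close>] v(1) by simp
    then show ?thesis
      using excess_sum_nonneg[of x' y] \<open>g y < f y\<close> by (simp add: excess_set_def)
  qed
  then show ?thesis
    using v realizes_in_Q unfolding cone_signature_def by blast
qed

end

lemma Apairs_eq_if_same_cone_signature:
  assumes "g1 \<in> Eprime d" "Apairs d g1 \<subseteq> Apairs d f" "rk d (Apairs d g1) = 1"
    and "g2 \<in> Eprime d" "Apairs d g2 \<subseteq> Apairs d f" "rk d (Apairs d g2) = 1"
    and "cone_signature (excess_set g1) = cone_signature (excess_set g2)"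
  shows "Apairs d g1 = Apairs d g2"
proof -
  have realized: "excess_set g = {x. \<exists>c\<in>cone_signature (excess_set g). realizes c x}"
    if "g \<in> Eprime d" "Apairs d g \<subseteq> Apairs d f" for g
    using excess_set_realized[OF that] unfolding cone_signature_def by blast
  have "excess_set g1 = {x. \<exists>c\<in>cone_signature (excess_set g1). realizes c x}"
    by (rule realized[OF assms(1,2)])
  also have "\<dots> = {x. \<exists>c\<in>cone_signature (excess_set g2). realizes c x}"
    by (simp only: assms(7))
  also have "\<dots> = excess_set g2"
    by (rule realized[OF assms(4,5), symmetric])
  finally have excess_eq: "excess_set g1 = excess_set g2" .
  have "g1 x + g1 y = d x y \<longleftrightarrow> g2 x + g2 y = d x y" for x y
    unfolding g_tight_iff_sign_pattern[OF assms(1-3)] g_tight_iff_sign_pattern[OF assms(4-6)] excess_eq ..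
  then show ?thesis unfolding Apairs_def by simp
qed

lemma card_rank_one_subsets_le:
  "finite {A \<in> Acal d. A \<subseteq> Apairs d f \<and> rk d A = 1}
   \<and> card {A \<in> Acal d. A \<subseteq> Apairs d f \<and> rk d A = 1} \<le> 2 ^ card Q"
proof -
  define G where "G = {g \<in> Eprime d. Apairs d g \<subseteq> Apairs d f \<and> rk d (Apairs d g) = 1}"
  define \<sigma> where "\<sigma> g = cone_signature (excess_set g)" for g
  define from_signature where "from_signature S = Apairs d (SOME g. g \<in> G \<and> \<sigma> g = S)" for S
  have recover: "Apairs d g = from_signature (\<sigma> g)" if "g \<in> G" for g
  proof -
    define g' where "g' = (SOME g'. g' \<in> G \<and> \<sigma> g' = \<sigma> g)"
    have "\<exists>g'. g' \<in> G \<and> \<sigma> g' = \<sigma> g" using that by blast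
    then have "g' \<in> G \<and> \<sigma> g' = \<sigma> g" unfolding g'_def by (rule someI_ex)
    then have "Apairs d g = Apairs d g'"
      using Apairs_eq_if_same_cone_signature[of g g'] that unfolding G_def \<sigma>_def by auto
    then show ?thesis by (simp add: from_signature_def g'_def)
  qed
  let ?S = "{A \<in> Acal d. A \<subseteq> Apairs d f \<and> rk d A = 1}"
  have S_sub: "?S \<subseteq> from_signature ` Pow Q"
  proof
    fix A assume "A \<in> ?S"
    then obtain g where "g \<in> G" "A = Apairs d g" unfolding Acal_def G_def by auto
    moreover have "\<sigma> g \<in> Pow Q" unfolding \<sigma>_def cone_signature_def by auto
    ultimately show "A \<in> from_signature ` Pow Q" using recover by blast
  qed
  have finite_image: "finite (from_signature ` Pow Q)" using finite_Q by simp
  have "card ?S \<le> card (from_signature ` Pow Q)" by (rule card_mono[OF finite_image S_sub])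
  also have "\<dots> \<le> card (Pow Q)" by (rule card_image_le) (simp add: finite_Q)
  also have "\<dots> = 2 ^ card Q" by (rule card_Pow[OF finite_Q])
  finally show ?thesis using finite_subset[OF S_sub finite_image] by blast
qed

end

theorem proposition5p12:
  fixes d :: "'a \<Rightarrow> 'a \<Rightarrow> real" and \<beta> \<alpha> :: real and z :: 'a
  assumes "metric_on d"
    and "discretely_geodesic d"
    and "stable_intervals d \<beta>"
    and "bounded_subsets_finite d"
    and "\<alpha> > 0"
  defines "B \<equiv> closed_ball_d d z (2 * \<alpha> * \<beta>)"
  shows "finite (pointed_cones d B)
    \<and> (\<forall>f \<in> Eprime d. f z \<le> \<alpha> \<longrightarrow> 2 * rk d (Apairs d f) \<le> enat (card (pointed_cones d B)))
    \<and> (\<forall>f \<in> Eprime d. f z \<le> \<alpha> \<and> rk d (Apairs d f) = 0 \<longrightarrow>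
         finite {A \<in> Acal d. A \<subseteq> Apairs d f \<and> rk d A = 1}
         \<and> card {A \<in> Acal d. A \<subseteq> Apairs d f \<and> rk d A = 1} \<le> 2 ^ card (pointed_cones d B))"
proof -
  interpret stable_geodesic_space d \<beta>
    using assms(1-4) by unfold_locales
  have point: "tight_span_point d \<beta> f \<alpha> z" if "f \<in> Eprime d" "f z \<le> \<alpha>" for f
    using assms(1-4) that by unfold_locales
  show ?thesis
    unfolding B_def
  proof (intro conjI ballI impI)
    show "finite (pointed_cones d (closed_ball_d d z (2 * \<alpha> * \<beta>)))"
      unfolding closed_ball_d_def using finite_ball by (rule finite_pointed_cones)
  next
    fix f assume "f \<in> Eprime d" "f z \<le> \<alpha>"
    then show "2 * rk d (Apairs d f) \<le> enat (card (pointed_cones d (closed_ball_d d z (2 * \<alpha> * \<beta>))))"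
      by (rule tight_span_point.twice_rk_le_card_Q[OF point])
  next
    fix f assume "f \<in> Eprime d" "f z \<le> \<alpha> \<and> rk d (Apairs d f) = 0"
    then show "finite {A \<in> Acal d. A \<subseteq> Apairs d f \<and> rk d A = 1}"
      "card {A \<in> Acal d. A \<subseteq> Apairs d f \<and> rk d A = 1}
         \<le> 2 ^ card (pointed_cones d (closed_ball_d d z (2 * \<alpha> * \<beta>)))"
      using tight_span_point.card_rank_one_subsets_le[OF point] by blast+
  qed
qed

end
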